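(* Let $\bm X$ be an $n\times p$ matrix of full column rank and $\bm Z$ an $n\times q$ matrix, $q=q_1+\dots+q_r$. There exists a finite constant $\hat\varphi$, depending only on $\bm W=(\bm X,\bm Z)$ (and the block sizes $q_j$), such that for every $\bm\tau\in(0,\infty)^r$ and every $\bm l=(l_1,\dots,l_n)^T\in\mathbb{R}^n$, $$\big\|S(\bm\tau)^{-1}\bm Z^T(\bm I-P_X)\bm l\big\|\le\hat\varphi\sum_{i=1}^n|l_i|,$$ where $\|\cdot\|$ is the Euclidean norm.
   Context: $P_X=\bm X(\bm X^T\bm X)^{-1}\bm X^T$; $\bm D(\bm\tau)=\oplus_{j=1}^r\tau_j\bm I_{q_j}$; $S(\bm\tau)=\bm Z^T(\bm I-P_X)\bm Z+\bm D(\bm\tau)$. *)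

theory Defs
  imports "HOL-Analysis.Analysis"
begin

text \<open>Matrices are HOL-Analysis matrices: an n x p matrix is of type real^'p^'n.
  The q columns of Z are partitioned into r blocks by a map blk :: 'q \<Rightarrow> 'r;
  block j consists of the columns k with blk k = j (so q_j = card of that set).\<close>

definition proj_mat :: "real^'p^'n \<Rightarrow> real^'n^'n" where
  "proj_mat X = X ** matrix_inv (transpose X ** X) ** transpose X"

definition blockdiag :: "('q \<Rightarrow> 'r) \<Rightarrow> real^'r \<Rightarrow> real^'q^'q" where
  "blockdiag blk \<tau> = (\<chi> i j. if i = j then \<tau> $ (blk i) else 0)"

definition S_mat :: "real^'p^'n \<Rightarrow> real^'q^'n \<Rightarrow> ('q \<Rightarrow> 'r) \<Rightarrow> real^'r \<Rightarrow> real^'q^'q" where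
  "S_mat X Z blk \<tau> = transpose Z ** (mat 1 - proj_mat X) ** Z + blockdiag blk \<tau>"

end

theory Submission
  imports Defs
begin

text \<open>
  With M = I - P_X, a symmetric idempotent, and B = M Z one has S(\<tau>) = B^T B + D(\<tau>) and
  Z^T M l = B^T (M l). Testing the equation (B^T B + D) x = B^T v against x gives
  \<parallel>B x\<parallel> \<le> \<parallel>v\<parallel>; testing it against a kernel vector z of B gives \<Sum>_k d_k z_k x_k = 0, so no
  nonzero z \<in> ker B is sign-conformal to x (z_k x_k > 0 wherever z_k \<noteq> 0). A compactness argument
  on the unit sphere shows that all vectors with this property satisfy \<parallel>x\<parallel> \<le> C \<parallel>B x\<parallel> for a
  constant C depending only on B, hence not on \<tau>; finally \<parallel>M l\<parallel> \<le> \<parallel>l\<parallel> \<le> \<Sum>_i |l_i|.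
\<close>

lemma inner_matrix_vector_transpose:
  fixes A :: "real^'m^'n"
  shows "inner (A *v x) y = inner x (transpose A *v y)"
  by (metis dot_lmul_matrix inner_commute transpose_matrix_vector)

lemma matrix_inv_inverse:
  fixes A :: "'a::semiring_1^'n^'n"
  assumes "invertible A"
  shows "A ** matrix_inv A = mat 1" and "matrix_inv A ** A = mat 1"
  using someI_ex[OF assms[unfolded invertible_def]] unfolding matrix_inv_def by auto

lemma matrix_inv_symmetric:
  fixes A :: "'a::comm_semiring_1^'n^'n"
  assumes "invertible A" "transpose A = A"
  shows "transpose (matrix_inv A) = matrix_inv A"
proof -
  let ?G = "matrix_inv A"
  have "transpose ?G ** A = mat 1"
    by (metis assms matrix_inv_inverse(1) matrix_transpose_mul transpose_mat)
  then have "transpose ?G = (transpose ?G ** A) ** ?G"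
    by (metis assms(1) matrix_inv_inverse(1) matrix_mul_assoc matrix_mul_rid)
  then show ?thesis
    using \<open>transpose ?G ** A = mat 1\<close> by simp
qed

lemma invertible_gram_matrix:
  fixes X :: "real^'p^'n"
  assumes "rank X = CARD('p)"
  shows "invertible (transpose X ** X)"
  unfolding invertible_left_inverse matrix_left_invertible_ker
proof (intro allI impI)
  fix x assume "(transpose X ** X) *v x = 0"
  then have "inner (X *v x) (X *v x) = 0"
    by (simp add: inner_matrix_vector_transpose matrix_vector_mul_assoc del: transpose_matrix_vector)
  then have "X *v x = X *v 0"
    by simp
  then show "x = 0"
    using assms full_rank_injective by (metis injD)
qed

lemma proj_mat_symmetric:
  fixes X :: "real^'p^'n"
  assumes "rank X = CARD('p)"
  shows "transpose (proj_mat X) = proj_mat X"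
  using matrix_inv_symmetric[OF invertible_gram_matrix[OF assms]]
  by (simp add: proj_mat_def matrix_transpose_mul matrix_mul_assoc)

lemma proj_mat_idempotent:
  fixes X :: "real^'p^'n"
  assumes "rank X = CARD('p)"
  shows "proj_mat X ** proj_mat X = proj_mat X"
proof -
  let ?G = "matrix_inv (transpose X ** X)"
  have "proj_mat X ** proj_mat X = X ** (?G ** (transpose X ** X)) ** ?G ** transpose X"
    by (simp add: proj_mat_def matrix_mul_assoc)
  then show ?thesis
    by (simp add: matrix_inv_inverse(2)[OF invertible_gram_matrix[OF assms]] proj_mat_def)
qed

lemma complement_symmetric_idempotent:
  fixes P :: "real^'n^'n"
  assumes "transpose P = P" "P ** P = P"
  shows "transpose (mat 1 - P) = mat 1 - P" and "(mat 1 - P) ** (mat 1 - P) = mat 1 - P"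
proof -
  have "transpose (mat 1 - P) = transpose (mat 1) - transpose P"
    by (simp add: transpose_def vec_eq_iff)
  then show "transpose (mat 1 - P) = mat 1 - P"
    using assms(1) by simp
  have Mv: "(mat 1 - P) *v y = y - P *v y" for y
    by (simp add: matrix_vector_mult_diff_rdistrib)
  have "P *v (P *v x) = P *v x" for x
    using assms(2) by (simp add: matrix_vector_mul_assoc)
  then have "(mat 1 - P) *v ((mat 1 - P) *v x) = (mat 1 - P) *v x" for x
    by (simp add: Mv matrix_vector_mult_diff_distrib)
  then show "(mat 1 - P) ** (mat 1 - P) = mat 1 - P"
    by (simp add: matrix_eq matrix_vector_mul_assoc)
qed

lemma norm_symmetric_idempotent_le:
  fixes M :: "real^'n^'n"
  assumes "transpose M = M" "M ** M = M"
  shows "norm (M *v x) \<le> norm x"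
proof -
  have "norm (M *v x) ^ 2 = inner x (M *v x)"
    using inner_matrix_vector_transpose[of M x "M *v x"] assms
    by (simp add: power2_norm_eq_inner matrix_vector_mul_assoc del: transpose_matrix_vector)
  also have "\<dots> \<le> norm x * norm (M *v x)"
    by (rule norm_cauchy_schwarz)
  finally have "norm (M *v x) * norm (M *v x) \<le> norm x * norm (M *v x)"
    by (simp add: power2_eq_square)
  then show ?thesis
    using mult_right_le_imp_le[of "norm (M *v x)" "norm x" "norm (M *v x)"]
    by (cases "norm (M *v x) = 0") auto
qed

lemma residual_proj_mat_symmetric_idempotent:
  fixes X :: "real^'p^'n"
  assumes "rank X = CARD('p)"
  shows "transpose (mat 1 - proj_mat X) = mat 1 - proj_mat X"
    and "(mat 1 - proj_mat X) ** (mat 1 - proj_mat X) = mat 1 - proj_mat X"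
  using complement_symmetric_idempotent[OF proj_mat_symmetric[OF assms] proj_mat_idempotent[OF assms]]
  by auto

definition diag_mat :: "('n \<Rightarrow> real) \<Rightarrow> real^'n^'n" where
  "diag_mat d = (\<chi> i j. if i = j then d i else 0)"

lemma diag_mat_mult_vector: "diag_mat d *v y = (\<chi> k. d k * y $ k)"
  by (simp add: diag_mat_def matrix_vector_mult_def vec_eq_iff if_distrib if_distribR cong: if_cong)

lemma blockdiag_eq_diag_mat: "blockdiag blk \<tau> = diag_mat (\<lambda>k. \<tau> $ blk k)"
  by (simp add: blockdiag_def diag_mat_def)

lemma inner_gram_plus_diag_mat:
  fixes B :: "real^'q^'n"
  shows "inner w ((transpose B ** B + diag_mat d) *v y)
           = inner (B *v w) (B *v y) + (\<Sum>k\<in>UNIV. d k * (w $ k * y $ k))"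
proof -
  have "inner w ((transpose B ** B) *v y) = inner (B *v w) (B *v y)"
    by (simp add: inner_matrix_vector_transpose matrix_vector_mul_assoc del: transpose_matrix_vector)
  moreover have "inner w (diag_mat d *v y) = (\<Sum>k\<in>UNIV. d k * (w $ k * y $ k))"
    by (simp add: diag_mat_mult_vector inner_vec_def mult.left_commute)
  ultimately show ?thesis
    by (simp add: matrix_vector_mult_add_rdistrib inner_add_right)
qed

lemma positively_weighted_sum_conformal_eq_0:
  fixes z x :: "real^'q"
  assumes d: "\<And>k. 0 < d k" and conf: "\<And>k. z $ k \<noteq> 0 \<Longrightarrow> 0 < z $ k * x $ k"
    and sum: "(\<Sum>k\<in>UNIV. d k * (z $ k * x $ k)) \<le> 0"
  shows "z = 0"
proof -
  have nonneg: "0 \<le> d k * (z $ k * x $ k)" for k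
    using d[of k] conf[of k] by (cases "z $ k = 0") auto
  with sum have "(\<Sum>k\<in>UNIV. d k * (z $ k * x $ k)) = 0"
    by (simp add: antisym sum_nonneg)
  then have "d k * (z $ k * x $ k) = 0" for k
    using nonneg sum_nonneg_eq_0_iff[of UNIV "\<lambda>k. d k * (z $ k * x $ k)"] by simp
  then show ?thesis
    using d conf by (metis less_numeral_extra(3) mult_eq_0_iff vec_eq_iff zero_index)
qed

lemma invertible_gram_plus_diag_mat:
  fixes B :: "real^'q^'n"
  assumes d: "\<And>k. 0 < d k"
  shows "invertible (transpose B ** B + diag_mat d)"
  unfolding invertible_left_inverse matrix_left_invertible_ker
proof (intro allI impI)
  fix y assume "(transpose B ** B + diag_mat d) *v y = 0"
  then have "inner (B *v y) (B *v y) + (\<Sum>k\<in>UNIV. d k * (y $ k * y $ k)) = 0"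
    using inner_gram_plus_diag_mat[of y B d y] by simp
  then have "(\<Sum>k\<in>UNIV. d k * (y $ k * y $ k)) \<le> 0"
    using inner_ge_zero[of "B *v y"] by linarith
  then show "y = 0"
    using d not_real_square_gt_zero by (intro positively_weighted_sum_conformal_eq_0) blast+
qed

definition conformal_free :: "(real^'q \<Rightarrow> 'b::real_normed_vector) \<Rightarrow> real^'q \<Rightarrow> bool" where
  "conformal_free f x \<longleftrightarrow> (\<forall>z. f z = 0 \<and> (\<forall>k. z $ k \<noteq> 0 \<longrightarrow> 0 < z $ k * x $ k) \<longrightarrow> z = 0)"

lemma conformal_free_scaleR:
  fixes x :: "real^'q"
  assumes "conformal_free f x" "c > 0"
  shows "conformal_free f (c *\<^sub>R x)"
proof -
  have "0 < z $ k * x $ k" if "0 < z $ k * (c * x $ k)" for z :: "real^'q" and k :: 'q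
    using that \<open>c > 0\<close> by (metis mult.left_commute zero_less_mult_pos)
  then show ?thesis
    using assms(1) unfolding conformal_free_def by simp
qed

lemma conformal_free_sphere_bounded_below:
  fixes f :: "real^'q \<Rightarrow> 'b::real_normed_vector"
  assumes f: "bounded_linear f"
  obtains e where "e > 0" "\<And>u. u \<in> sphere 0 1 \<Longrightarrow> conformal_free f u \<Longrightarrow> e \<le> norm (f u)"
proof (rule ccontr)
  assume "\<not> thesis"
  with that have "\<forall>n. \<exists>u \<in> sphere 0 1. conformal_free f u \<and> norm (f u) < inverse (real (Suc n))"
    by (metis not_le of_nat_0_less_iff positive_imp_inverse_positive zero_less_Suc)
  then obtain u where u: "\<And>n. u n \<in> sphere 0 1" "\<And>n. conformal_free f (u n)"
      and fu: "\<And>n. norm (f (u n)) < inverse (real (Suc n))"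
    by metis
  obtain l r where l: "l \<in> sphere 0 1" and r: "strict_mono r" and ul: "(u \<circ> r) \<longlonglongrightarrow> l"
    using compact_sphere[of "0::real^'q" 1] u(1) unfolding compact_def by meson
  have "(\<lambda>n. f (u n)) \<longlonglongrightarrow> 0"
    by (rule Lim_null_comparison[OF always_eventually LIMSEQ_inverse_real_of_nat]) (use fu less_imp_le in blast)
  then have "((\<lambda>n. f (u n)) \<circ> r) \<longlonglongrightarrow> 0"
    using r by (rule LIMSEQ_subseq_LIMSEQ)
  moreover have "((\<lambda>n. f (u n)) \<circ> r) \<longlonglongrightarrow> f l"
    using bounded_linear.tendsto[OF f ul] by (simp add: o_def)
  ultimately have fl: "f l = 0"
    using LIMSEQ_unique by blast
  have "\<forall>\<^sub>F n in sequentially. l $ k \<noteq> 0 \<longrightarrow> 0 < l $ k * u (r n) $ k" for k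
  proof (cases "l $ k = 0")
    case False
    have "(\<lambda>n. l $ k * u (r n) $ k) \<longlonglongrightarrow> l $ k * l $ k"
      using ul by (intro tendsto_intros) (simp add: o_def)
    moreover have "0 < l $ k * l $ k"
      using False not_real_square_gt_zero by blast
    ultimately show ?thesis
      by (simp add: order_tendstoD(1))
  qed simp
  then have "\<forall>\<^sub>F n in sequentially. \<forall>k. l $ k \<noteq> 0 \<longrightarrow> 0 < l $ k * u (r n) $ k"
    by (rule eventually_all_finite)
  then obtain n where "\<forall>k. l $ k \<noteq> 0 \<longrightarrow> 0 < l $ k * u (r n) $ k"
    unfolding eventually_sequentially by blast
  \<comment> \<open>The limit l is a unit kernel vector conformal to u (r n), contradicting the choice of u.\<close>
  then have "l = 0"
    using u(2)[of "r n"] fl unfolding conformal_free_def by blast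
  then show False
    using l by simp
qed

lemma conformal_free_norm_bound:
  fixes f :: "real^'q \<Rightarrow> 'b::real_normed_vector"
  assumes f: "bounded_linear f"
  obtains C where "C > 0" "\<And>x. conformal_free f x \<Longrightarrow> norm x \<le> C * norm (f x)"
proof -
  interpret f: bounded_linear f by (rule f)
  obtain e where e: "e > 0" "\<And>u. u \<in> sphere 0 1 \<Longrightarrow> conformal_free f u \<Longrightarrow> e \<le> norm (f u)"
    using conformal_free_sphere_bounded_below[OF f] by blast
  have "norm x \<le> inverse e * norm (f x)" if x: "conformal_free f x" for x
  proof (cases "x = 0")
    case False
    let ?u = "inverse (norm x) *\<^sub>R x"
    have "e \<le> norm (f ?u)"
      using False x by (intro e(2)) (auto intro: conformal_free_scaleR)
    also have "\<dots> = norm (f x) / norm x"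
      by (simp add: f.scaleR divide_inverse mult.commute)
    finally show ?thesis
      using False \<open>e > 0\<close> by (simp add: field_simps)
  qed simp
  then show thesis
    using that[of "inverse e"] \<open>e > 0\<close> by simp
qed

lemma regularized_normal_equation_solution:
  fixes B :: "real^'q^'n"
  assumes d: "\<And>k. 0 < d k" and x: "(transpose B ** B + diag_mat d) *v x = transpose B *v v"
  shows "norm (B *v x) \<le> norm v" and "conformal_free ((*v) B) x"
proof -
  have key: "inner (B *v w) (B *v x) + (\<Sum>k\<in>UNIV. d k * (w $ k * x $ k)) = inner (B *v w) v" for w
    using inner_gram_plus_diag_mat[of w B d x] x
    by (simp add: inner_matrix_vector_transpose del: transpose_matrix_vector)
  have "0 \<le> (\<Sum>k\<in>UNIV. d k * (x $ k * x $ k))"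
    using d by (intro sum_nonneg) (simp add: less_imp_le)
  with key[of x] have "norm (B *v x) ^ 2 \<le> inner (B *v x) v"
    by (simp add: power2_norm_eq_inner)
  also have "\<dots> \<le> norm (B *v x) * norm v"
    by (rule norm_cauchy_schwarz)
  finally have "norm (B *v x) * norm (B *v x) \<le> norm v * norm (B *v x)"
    by (simp add: power2_eq_square mult.commute)
  then show "norm (B *v x) \<le> norm v"
    using mult_right_le_imp_le[of "norm (B *v x)" "norm v" "norm (B *v x)"]
    by (cases "norm (B *v x) = 0") auto
  show "conformal_free ((*v) B) x"
    unfolding conformal_free_def
  proof (intro allI impI)
    fix z assume z: "B *v z = 0 \<and> (\<forall>k. z $ k \<noteq> 0 \<longrightarrow> 0 < z $ k * x $ k)"
    then have "(\<Sum>k\<in>UNIV. d k * (z $ k * x $ k)) = 0"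
      using key[of z] by simp
    then show "z = 0"
      using d z by (intro positively_weighted_sum_conformal_eq_0[where d = d]) auto
  qed
qed

lemma S_mat_eq_gram_plus_diag_mat:
  fixes X :: "real^'p^'n" and Z :: "real^'q^'n"
  assumes "rank X = CARD('p)"
  shows "S_mat X Z blk \<tau> = transpose ((mat 1 - proj_mat X) ** Z) ** ((mat 1 - proj_mat X) ** Z)
                              + diag_mat (\<lambda>k. \<tau> $ blk k)"
proof -
  let ?M = "mat 1 - proj_mat X"
  note M = residual_proj_mat_symmetric_idempotent[OF assms]
  have "transpose (?M ** Z) ** (?M ** Z) = transpose Z ** (?M ** ?M) ** Z"
    by (simp add: matrix_transpose_mul matrix_mul_assoc M(1))
  then show ?thesis
    by (simp add: S_mat_def M(2) blockdiag_eq_diag_mat)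
qed

lemma S_mat_residual_solution:
  fixes X :: "real^'p^'n" and Z :: "real^'q^'n" and blk :: "'q \<Rightarrow> 'r::finite"
    and \<tau> :: "real^'r" and l :: "real^'n"
  assumes "rank X = CARD('p)" and \<tau>: "\<forall>j. 0 < \<tau> $ j"
  defines "M \<equiv> mat 1 - proj_mat X"
  defines "B \<equiv> M ** Z"
    and "x \<equiv> matrix_inv (S_mat X Z blk \<tau>) *v (transpose Z *v (M *v l))"
  shows "norm (B *v x) \<le> norm l" and "conformal_free ((*v) B) x"
proof -
  let ?d = "\<lambda>k. \<tau> $ blk k"
  let ?S = "S_mat X Z blk \<tau>"
  note M = residual_proj_mat_symmetric_idempotent[OF assms(1), folded M_def]
  have S: "?S = transpose B ** B + diag_mat ?d"
    unfolding B_def M_def by (rule S_mat_eq_gram_plus_diag_mat[OF assms(1)])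
  have "transpose B = transpose Z ** M"
    by (simp add: B_def matrix_transpose_mul M(1))
  then have "transpose B *v (M *v l) = transpose Z *v ((M ** M) *v l)"
    by (simp add: matrix_vector_mul_assoc matrix_mul_assoc del: transpose_matrix_vector)
  then have "transpose Z *v (M *v l) = transpose B *v (M *v l)"
    by (simp add: M(2))
  moreover have "?S ** matrix_inv ?S = mat 1"
    unfolding S using \<tau> by (intro matrix_inv_inverse(1) invertible_gram_plus_diag_mat) auto
  ultimately have "?S *v x = transpose B *v (M *v l)"
    unfolding x_def by (metis matrix_vector_mul_assoc matrix_vector_mul_lid)
  then have "norm (B *v x) \<le> norm (M *v l)" and "conformal_free ((*v) B) x"
    using regularized_normal_equation_solution[of ?d B x] \<tau> S by auto
  then show "norm (B *v x) \<le> norm l" and "conformal_free ((*v) B) x"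
    using norm_symmetric_idempotent_le[OF M, of l] by auto
qed

theorem lemma2:
  fixes X :: "real^'p^'n" and Z :: "real^'q^'n" and blk :: "'q \<Rightarrow> 'r::finite"
  assumes "rank X = CARD('p)"
  shows "\<exists>\<phi>::real. \<forall>\<tau>::real^'r. \<forall>l::real^'n.
           (\<forall>j. \<tau> $ j > 0) \<longrightarrow>
           norm (matrix_inv (S_mat X Z blk \<tau>) *v (transpose Z *v ((mat 1 - proj_mat X) *v l)))
             \<le> \<phi> * (\<Sum>i\<in>UNIV. \<bar>l $ i\<bar>)"
proof -
  let ?B = "(mat 1 - proj_mat X) ** Z"
  obtain C where "C > 0" and C: "\<And>x. conformal_free ((*v) ?B) x \<Longrightarrow> norm x \<le> C * norm (?B *v x)"
    using conformal_free_norm_bound[OF matrix_vector_mul_bounded_linear] by blast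
  have "norm (matrix_inv (S_mat X Z blk \<tau>) *v (transpose Z *v ((mat 1 - proj_mat X) *v l)))
          \<le> C * (\<Sum>i\<in>UNIV. \<bar>l $ i\<bar>)" (is "norm ?x \<le> _")
    if "\<forall>j. \<tau> $ j > 0" for \<tau> l
  proof -
    note x = S_mat_residual_solution[OF assms that, of Z blk l]
    have "norm ?x \<le> C * norm (?B *v ?x)"
      using C x(2) by blast
    also have "\<dots> \<le> C * norm l"
      using x(1) \<open>C > 0\<close> by simp
    also have "\<dots> \<le> C * (\<Sum>i\<in>UNIV. \<bar>l $ i\<bar>)"
      using norm_le_l1_cart \<open>C > 0\<close> by simp
    finally show ?thesis .
  qed
  then show ?thesis
    by blast
qed

end
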